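(* There exists a constant $c>0$ such that, for every generic set $P$ of $n$ points in the plane, $\operatorname{cr}(P) < cn$.
   Context: A finite planar point set is in general position if no three of its points are collinear. It is generic if it is in general position and every subset of it has a unique (Euclidean) minimum spanning tree (MST); for a generic set $X$, $T_X$ denotes the MST of $X$ (the complete graph on $X$ with edges drawn as straight segments weighted by Euclidean length). For disjoint point sets $R,B$ with $R\cup B$ generic, $\operatorname{cr}(R,B)$ denotes the number of crossings between the straight-line edges of $T_R$ and the straight-line edges of $T_B$. For a generic point set $P$, the bicolored MST crossing number is $\operatorname{cr}(P)=\max \operatorname{cr}(R,B)$, the maximum over all partitions (colorings) $P=R\cup B$ into two disjoint sets. *)

theory Defs
  imports "HOL-Analysis.Analysis"
begin

type_synonym point = "real ^ 2"

definition complete_edges :: "point set \<Rightarrow> point set set" where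
  "complete_edges X = {{a, b} | a b. a \<in> X \<and> b \<in> X \<and> a \<noteq> b}"

definition edge_len :: "point set \<Rightarrow> real" where
  "edge_len e = (THE d. \<exists>a b. e = {a, b} \<and> d = dist a b)"

definition weight :: "point set set \<Rightarrow> real" where
  "weight E = (\<Sum>e\<in>E. edge_len e)"

definition adj :: "point set set \<Rightarrow> (point \<times> point) set" where
  "adj E = {(a, b). {a, b} \<in> E \<and> a \<noteq> b}"

definition is_spanning_tree :: "point set \<Rightarrow> point set set \<Rightarrow> bool" where
  "is_spanning_tree X E \<longleftrightarrow>
     E \<subseteq> complete_edges X \<and>
     (\<forall>x\<in>X. \<forall>y\<in>X. (x, y) \<in> (adj E)\<^sup>*) \<and>
     card E = card X - 1"

definition is_MST :: "point set \<Rightarrow> point set set \<Rightarrow> bool" where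
  "is_MST X E \<longleftrightarrow> is_spanning_tree X E \<and>
     (\<forall>E'. is_spanning_tree X E' \<longrightarrow> weight E \<le> weight E')"

definition MST :: "point set \<Rightarrow> point set set" where
  "MST X = (THE E. is_MST X E)"

definition general_position :: "point set \<Rightarrow> bool" where
  "general_position P \<longleftrightarrow>
     (\<forall>a\<in>P. \<forall>b\<in>P. \<forall>c\<in>P. a \<noteq> b \<and> a \<noteq> c \<and> b \<noteq> c \<longrightarrow> \<not> collinear {a, b, c})"

definition generic :: "point set \<Rightarrow> bool" where
  "generic P \<longleftrightarrow> finite P \<and> general_position P \<and>
     (\<forall>S. S \<subseteq> P \<longrightarrow> (\<exists>!E. is_MST S E))"

definition cr2 :: "point set \<Rightarrow> point set \<Rightarrow> nat" where
  "cr2 R B = card {(e, f). e \<in> MST R \<and> f \<in> MST B \<and> convex hull e \<inter> convex hull f \<noteq> {}}"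

definition cr :: "point set \<Rightarrow> nat" where
  "cr P = Max {cr2 R (P - R) | R. R \<subseteq> P}"

end

theory Submission
  imports Defs
begin

text \<open>Charge each crossing between an edge of \<open>T\<^sub>R\<close> and an edge of \<open>T\<^sub>B\<close> to the shorter
  of the two edges. It then suffices that a segment \<open>cd\<close> is crossed by at most 2187 edges of a
  Euclidean MST that are at least as long as \<open>cd\<close>. Two distinct MST edges \<open>ab\<close>, \<open>a'b'\<close> cannot
  have both \<open>|aa'|\<close> and \<open>|bb'|\<close> shorter than \<open>|ab|\<close>: deleting \<open>ab\<close> splits the tree, and
  \<open>aa'\<close> or \<open>bb'\<close> would reconnect it more cheaply. But two long edges crossing \<open>cd\<close> within
  \<open>|cd|/8\<close> of each other, with unit directions within \<open>1/2\<close>, and split by \<open>cd\<close> with the same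
  piece shorter than \<open>|cd|/4\<close>, have endpoints that close to each other. Sorting the edges
  by these three features into \<open>9 \<cdot> 9 \<cdot> 9 \<cdot> 3 = 2187\<close> classes gives \<open>cr P \<le> 2187 |P|\<close>.\<close>

lemma sym_adj: "sym (adj E)"
  by (auto simp: sym_def adj_def insert_commute)

lemma rtrancl_adj_sym: "(x, y) \<in> (adj E)\<^sup>* \<Longrightarrow> (y, x) \<in> (adj E)\<^sup>*"
  using sym_rtrancl[OF sym_adj] by (auto dest: symD)

lemma rtrancl_adj_mono: "E \<subseteq> F \<Longrightarrow> (x, y) \<in> (adj E)\<^sup>* \<Longrightarrow> (x, y) \<in> (adj F)\<^sup>*"
  using rtrancl_mono[of "adj E" "adj F"] by (auto simp: adj_def)

lemma finite_complete_edges: "finite X \<Longrightarrow> finite (complete_edges X)"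
proof -
  assume "finite X"
  have "complete_edges X \<subseteq> (\<lambda>(a, b). {a, b}) ` (X \<times> X)"
    by (auto simp: complete_edges_def)
  then show ?thesis
    using \<open>finite X\<close> by (meson finite_SigmaI finite_imageI finite_subset)
qed

lemma doubleton_in_complete_edgesD: "{a, b} \<in> complete_edges X \<Longrightarrow> a \<in> X \<and> b \<in> X"
  by (auto simp: complete_edges_def doubleton_eq_iff)

lemma doubleton_in_complete_edgesI: "a \<in> X \<Longrightarrow> b \<in> X \<Longrightarrow> a \<noteq> b \<Longrightarrow> {a, b} \<in> complete_edges X"
  by (auto simp: complete_edges_def)

lemma in_complete_edgesE:
  assumes "e \<in> complete_edges X"
  obtains a b where "e = {a, b}" "a \<noteq> b"
  using assms by (auto simp: complete_edges_def)

lemma edge_len_doubleton [simp]: "edge_len {a, b} = dist a b"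
  unfolding edge_len_def by (rule the_equality) (auto simp: doubleton_eq_iff dist_commute)

lemma spanning_tree_finite_edges: "finite X \<Longrightarrow> is_spanning_tree X E \<Longrightarrow> finite E"
  using finite_complete_edges finite_subset by (auto simp: is_spanning_tree_def)

lemma card_edges_ge_if_connected:
  assumes "finite X" and E: "E \<subseteq> complete_edges X" and "r \<in> X"
    and conn: "\<forall>x\<in>X. (x, r) \<in> (adj E)\<^sup>*"
  shows "card X - 1 \<le> card E"
proof -
  define depth where "depth v = (LEAST n. (v, r) \<in> adj E ^^ n)" for v
  have parent_ex: "\<exists>w. (v, w) \<in> adj E \<and> depth w < depth v" if v: "v \<in> X - {r}" for v
  proof -
    obtain n where "(v, r) \<in> adj E ^^ n"
      using conn v rtrancl_power by blast
    then have path: "(v, r) \<in> adj E ^^ depth v"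
      unfolding depth_def by (rule LeastI)
    with v obtain m where m: "depth v = Suc m"
      by (cases "depth v") auto
    with path obtain w where w: "(v, w) \<in> adj E" "(w, r) \<in> adj E ^^ m"
      using relpow_Suc_D2 by metis
    have "depth w \<le> m"
      unfolding depth_def using w(2) by (rule Least_le)
    with w m show ?thesis by auto
  qed
  define parent where "parent v = (SOME w. (v, w) \<in> adj E \<and> depth w < depth v)" for v
  have parent: "(v, parent v) \<in> adj E \<and> depth (parent v) < depth v" if "v \<in> X - {r}" for v
    unfolding parent_def using parent_ex[OF that] by (rule someI_ex)
  \<comment> \<open>Two vertices sharing their parent edge would each be the other's parent.\<close>
  have "inj_on (\<lambda>v. {v, parent v}) (X - {r})"
  proof (rule inj_onI)
    fix v w assume v: "v \<in> X - {r}" and w: "w \<in> X - {r}" and "{v, parent v} = {w, parent w}"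
    then have "v = w \<or> (parent v = w \<and> parent w = v)"
      by (auto simp: doubleton_eq_iff)
    then show "v = w"
      using parent[OF v] parent[OF w] by auto
  qed
  moreover have "(\<lambda>v. {v, parent v}) ` (X - {r}) \<subseteq> E"
    using parent unfolding adj_def by auto
  moreover have "finite E"
    using E finite_complete_edges[OF \<open>finite X\<close>] finite_subset by blast
  ultimately have "card (X - {r}) \<le> card E"
    by (rule card_inj_on_le)
  with \<open>r \<in> X\<close> \<open>finite X\<close> show ?thesis
    by simp
qed

lemma reach_after_edge_removal:
  assumes "{a, b} \<in> E" and "(a, x) \<in> (adj E)\<^sup>*"
  shows "(a, x) \<in> (adj (E - {{a, b}}))\<^sup>* \<or> (b, x) \<in> (adj (E - {{a, b}}))\<^sup>*"
  using assms(2)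
proof (induction rule: rtrancl_induct)
  case base
  then show ?case by simp
next
  case (step y z)
  show ?case
  proof (cases "{y, z} = {a, b}")
    case True
    then show ?thesis by (auto simp: doubleton_eq_iff)
  next
    case False
    then have "(y, z) \<in> adj (E - {{a, b}})"
      using step(2) by (auto simp: adj_def)
    then show ?thesis
      using step(3) by (meson rtrancl_into_rtrancl)
  qed
qed

lemma spanning_tree_edge_removal_disconnects:
  assumes "finite X" and T: "is_spanning_tree X E" and ab: "{a, b} \<in> E" and "a \<noteq> b"
  shows "(a, b) \<notin> (adj (E - {{a, b}}))\<^sup>*"
proof
  let ?E' = "E - {{a, b}}"
  assume ab_conn: "(a, b) \<in> (adj ?E')\<^sup>*"
  have EX: "E \<subseteq> complete_edges X"
    using T by (simp add: is_spanning_tree_def)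
  then have "a \<in> X" "b \<in> X"
    using doubleton_in_complete_edgesD ab by blast+
  have "\<forall>x\<in>X. (x, a) \<in> (adj ?E')\<^sup>*"
  proof
    fix x assume "x \<in> X"
    then have "(a, x) \<in> (adj E)\<^sup>*"
      using T \<open>a \<in> X\<close> by (simp add: is_spanning_tree_def)
    then have "(a, x) \<in> (adj ?E')\<^sup>* \<or> (b, x) \<in> (adj ?E')\<^sup>*"
      by (rule reach_after_edge_removal[OF ab])
    then show "(x, a) \<in> (adj ?E')\<^sup>*"
      using ab_conn by (meson rtrancl_trans rtrancl_adj_sym)
  qed
  then have "card X - 1 \<le> card ?E'"
    using card_edges_ge_if_connected[OF \<open>finite X\<close> _ \<open>a \<in> X\<close>] EX by blast
  moreover have "card {a, b} \<le> card X"
    using \<open>a \<in> X\<close> \<open>b \<in> X\<close> \<open>finite X\<close> by (intro card_mono) auto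
  ultimately show False
    using T ab \<open>a \<noteq> b\<close> spanning_tree_finite_edges[OF \<open>finite X\<close> T]
    by (simp add: is_spanning_tree_def card_Diff_singleton)
qed

lemma MST_exchange:
  assumes "finite X" and M: "is_MST X E" and ab: "{a, b} \<in> E" and "a \<noteq> b"
    and g: "g \<in> complete_edges X" and reconnect: "(a, b) \<in> (adj (insert g (E - {{a, b}})))\<^sup>*"
  shows "dist a b \<le> edge_len g"
proof (rule ccontr)
  let ?E' = "E - {{a, b}}"
  let ?E'' = "insert g ?E'"
  assume shorter: "\<not> dist a b \<le> edge_len g"
  have T: "is_spanning_tree X E"
    using M by (simp add: is_MST_def)
  have EX: "E \<subseteq> complete_edges X"
    using T by (simp add: is_spanning_tree_def)
  have "finite E"
    using spanning_tree_finite_edges[OF \<open>finite X\<close> T] .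
  have "a \<in> X"
    using doubleton_in_complete_edgesD ab EX by blast
  have "g \<notin> ?E'"
    using reconnect spanning_tree_edge_removal_disconnects[OF \<open>finite X\<close> T ab \<open>a \<noteq> b\<close>]
    by (metis insert_absorb)
  have "(a, x) \<in> (adj ?E'')\<^sup>*" if "x \<in> X" for x
  proof -
    have "(a, x) \<in> (adj E)\<^sup>*"
      using T \<open>a \<in> X\<close> that by (simp add: is_spanning_tree_def)
    then have "(a, x) \<in> (adj ?E')\<^sup>* \<or> (b, x) \<in> (adj ?E')\<^sup>*"
      by (rule reach_after_edge_removal[OF ab])
    then show ?thesis
      using reconnect rtrancl_adj_mono[of ?E' ?E''] by (meson rtrancl_trans subset_insertI)
  qed
  then have "\<forall>x\<in>X. \<forall>y\<in>X. (x, y) \<in> (adj ?E'')\<^sup>*"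
    by (meson rtrancl_trans rtrancl_adj_sym)
  moreover have "card ?E'' = card E"
  proof -
    have "card E > 0"
      using \<open>finite E\<close> ab card_gt_0_iff by blast
    then show ?thesis
      using \<open>finite E\<close> \<open>g \<notin> ?E'\<close> ab by (simp add: card_Diff_singleton)
  qed
  ultimately have "is_spanning_tree X ?E''"
    using T g EX by (auto simp: is_spanning_tree_def)
  then have "weight E \<le> weight ?E''"
    using M by (simp add: is_MST_def)
  moreover have "weight ?E'' = edge_len g + weight ?E'"
    unfolding weight_def using \<open>g \<notin> ?E'\<close> \<open>finite E\<close> by simp
  moreover have "weight E = dist a b + weight ?E'"
    unfolding weight_def using \<open>finite E\<close> ab by (simp add: sum.remove)
  ultimately show False
    using shorter by simp
qed

lemma MST_edge_le_max_endpoint_dist: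
  assumes "finite X" and M: "is_MST X E" and ab: "{a, b} \<in> E" and ab': "{a', b'} \<in> E"
    and "{a, b} \<noteq> {a', b'}" and "a \<noteq> b" and "a' \<noteq> b'"
  shows "dist a b \<le> max (dist a a') (dist b b')"
proof -
  let ?E' = "E - {{a, b}}"
  have T: "is_spanning_tree X E"
    using M by (simp add: is_MST_def)
  have EX: "E \<subseteq> complete_edges X"
    using T by (simp add: is_spanning_tree_def)
  have X: "a \<in> X" "b \<in> X" "a' \<in> X" "b' \<in> X"
    using doubleton_in_complete_edgesD ab ab' EX by blast+
  have cut: "(a, b) \<notin> (adj ?E')\<^sup>*"
    by (rule spanning_tree_edge_removal_disconnects[OF \<open>finite X\<close> T ab \<open>a \<noteq> b\<close>])
  have a'b': "(a', b') \<in> adj ?E'"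
    using ab' \<open>{a, b} \<noteq> {a', b'}\<close> \<open>a' \<noteq> b'\<close> by (auto simp: adj_def)
  have "(a, a') \<in> (adj E)\<^sup>*"
    using T X by (simp add: is_spanning_tree_def)
  then consider "(a, a') \<in> (adj ?E')\<^sup>*" | "(b, a') \<in> (adj ?E')\<^sup>*"
    using reach_after_edge_removal[OF ab] by blast
  then show ?thesis
  proof cases
    case 1
    then have "(a, b') \<in> (adj ?E')\<^sup>*"
      using a'b' by (rule rtrancl_into_rtrancl)
    with cut have "b \<noteq> b'"
      by blast
    let ?E'' = "insert {b, b'} ?E'"
    have "(a, b') \<in> (adj ?E'')\<^sup>*"
      using \<open>(a, b') \<in> (adj ?E')\<^sup>*\<close> rtrancl_adj_mono[of ?E' ?E''] by blast
    moreover have "(b', b) \<in> adj ?E''"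
      using \<open>b \<noteq> b'\<close> by (auto simp: adj_def)
    ultimately have "(a, b) \<in> (adj ?E'')\<^sup>*"
      by (rule rtrancl_into_rtrancl)
    then have "dist a b \<le> dist b b'"
      using MST_exchange[OF \<open>finite X\<close> M ab \<open>a \<noteq> b\<close> doubleton_in_complete_edgesI] X \<open>b \<noteq> b'\<close>
      by simp
    then show ?thesis
      by simp
  next
    case 2
    then have "(a', b) \<in> (adj ?E')\<^sup>*"
      by (rule rtrancl_adj_sym)
    with cut have "a \<noteq> a'"
      by blast
    let ?E'' = "insert {a, a'} ?E'"
    have "(a', b) \<in> (adj ?E'')\<^sup>*"
      using \<open>(a', b) \<in> (adj ?E')\<^sup>*\<close> rtrancl_adj_mono[of ?E' ?E''] by blast
    moreover have "(a, a') \<in> adj ?E''"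
      using \<open>a \<noteq> a'\<close> by (auto simp: adj_def)
    ultimately have "(a, b) \<in> (adj ?E'')\<^sup>*"
      by (rule converse_rtrancl_into_rtrancl[rotated])
    then have "dist a b \<le> dist a a'"
      using MST_exchange[OF \<open>finite X\<close> M ab \<open>a \<noteq> b\<close> doubleton_in_complete_edgesI] X \<open>a \<noteq> a'\<close>
      by simp
    then show ?thesis
      by simp
  qed
qed

definition split_type :: "real \<Rightarrow> real \<Rightarrow> real \<Rightarrow> int" where
  "split_type L \<alpha> \<beta> = (if \<beta> < L / 4 then 0 else if \<alpha> < L / 4 then 1 else 2)"

lemma split_type_eq_imp_piece_bounds:
  fixes \<alpha>1 \<beta>1 \<alpha>2 \<beta>2 D L :: real
  assumes "0 \<le> \<alpha>1" "0 \<le> \<beta>1" "0 \<le> \<alpha>2" "0 \<le> \<beta>2" "L \<le> \<alpha>1 + \<beta>1" "L \<le> \<alpha>2 + \<beta>2"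
    and "D < L / 8" and "split_type L \<alpha>1 \<beta>1 = split_type L \<alpha>2 \<beta>2"
  shows "D + \<bar>\<alpha>1 - \<alpha>2\<bar> + min \<alpha>1 \<alpha>2 / 2 < max (\<alpha>1 + \<beta>1) (\<alpha>2 + \<beta>2)"
    and "D + \<bar>\<beta>1 - \<beta>2\<bar> + min \<beta>1 \<beta>2 / 2 < max (\<alpha>1 + \<beta>1) (\<alpha>2 + \<beta>2)"
  using assms unfolding split_type_def
  by (auto simp: abs_if min_def max_def split: if_splits)

lemma norm_scaleR_diff_le:
  fixes u v :: "'a::real_normed_vector"
  assumes "norm u = 1" "norm v = 1" "0 \<le> p" "0 \<le> q"
  shows "norm (p *\<^sub>R u - q *\<^sub>R v) \<le> \<bar>p - q\<bar> + min p q * norm (u - v)"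
proof (cases "q \<le> p")
  case True
  have "norm (p *\<^sub>R u - q *\<^sub>R v) = norm ((p - q) *\<^sub>R u + q *\<^sub>R (u - v))"
    by (simp add: algebra_simps)
  also have "\<dots> \<le> (p - q) + q * norm (u - v)"
    using norm_triangle_ineq[of "(p - q) *\<^sub>R u" "q *\<^sub>R (u - v)"] True assms by simp
  finally show ?thesis
    using True by simp
next
  case False
  have "norm (p *\<^sub>R u - q *\<^sub>R v) = norm (p *\<^sub>R (u - v) - (q - p) *\<^sub>R v)"
    by (simp add: algebra_simps)
  also have "\<dots> \<le> p * norm (u - v) + (q - p)"
    using norm_triangle_ineq4[of "p *\<^sub>R (u - v)" "(q - p) *\<^sub>R v"] False assms by simp
  finally show ?thesis
    using False by simp
qed

lemma split_endpoints_close: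
  fixes x1 x2 u1 u2 :: "'a::real_normed_vector"
  assumes u: "norm u1 = 1" "norm u2 = 1" "norm (u1 - u2) \<le> 1 / 2"
    and x: "norm (x1 - x2) < L / 8"
    and pieces: "0 \<le> \<alpha>1" "0 \<le> \<beta>1" "0 \<le> \<alpha>2" "0 \<le> \<beta>2" "L \<le> \<alpha>1 + \<beta>1" "L \<le> \<alpha>2 + \<beta>2"
    and type: "split_type L \<alpha>1 \<beta>1 = split_type L \<alpha>2 \<beta>2"
  shows "norm ((x1 + \<alpha>1 *\<^sub>R u1) - (x2 + \<alpha>2 *\<^sub>R u2)) < max (\<alpha>1 + \<beta>1) (\<alpha>2 + \<beta>2)"
    and "norm ((x1 - \<beta>1 *\<^sub>R u1) - (x2 - \<beta>2 *\<^sub>R u2)) < max (\<alpha>1 + \<beta>1) (\<alpha>2 + \<beta>2)"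
proof -
  have scaled: "norm (p *\<^sub>R u1 - q *\<^sub>R u2) \<le> \<bar>p - q\<bar> + min p q / 2" if "0 \<le> p" "0 \<le> q" for p q
  proof -
    have "min p q * norm (u1 - u2) \<le> min p q * (1 / 2)"
      using u(3) that by (intro mult_left_mono) auto
    then show ?thesis
      using norm_scaleR_diff_le[OF u(1,2) that] by linarith
  qed
  have "norm ((x1 + \<alpha>1 *\<^sub>R u1) - (x2 + \<alpha>2 *\<^sub>R u2))
      \<le> norm (x1 - x2) + norm (\<alpha>1 *\<^sub>R u1 - \<alpha>2 *\<^sub>R u2)"
    using norm_triangle_ineq[of "x1 - x2" "\<alpha>1 *\<^sub>R u1 - \<alpha>2 *\<^sub>R u2"]
    by (simp add: algebra_simps)
  then show "norm ((x1 + \<alpha>1 *\<^sub>R u1) - (x2 + \<alpha>2 *\<^sub>R u2)) < max (\<alpha>1 + \<beta>1) (\<alpha>2 + \<beta>2)"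
    using scaled[of \<alpha>1 \<alpha>2] split_type_eq_imp_piece_bounds(1)[OF pieces x type] pieces by linarith
  have "norm ((x1 - \<beta>1 *\<^sub>R u1) - (x2 - \<beta>2 *\<^sub>R u2))
      \<le> norm (x1 - x2) + norm (\<beta>1 *\<^sub>R u1 - \<beta>2 *\<^sub>R u2)"
    using norm_triangle_ineq4[of "x1 - x2" "\<beta>1 *\<^sub>R u1 - \<beta>2 *\<^sub>R u2"]
    by (simp add: algebra_simps)
  then show "norm ((x1 - \<beta>1 *\<^sub>R u1) - (x2 - \<beta>2 *\<^sub>R u2)) < max (\<alpha>1 + \<beta>1) (\<alpha>2 + \<beta>2)"
    using scaled[of \<beta>1 \<beta>2] split_type_eq_imp_piece_bounds(2)[OF pieces x type] pieces by linarith
qed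

lemma floor_eq_imp_abs_diff_less:
  fixes p q k :: real
  assumes "\<lfloor>k * p\<rfloor> = \<lfloor>k * q\<rfloor>" and "0 < k"
  shows "\<bar>p - q\<bar> < 1 / k"
proof -
  have "\<bar>k * p - k * q\<bar> < 1"
    using assms(1) by linarith
  then have "k * \<bar>p - q\<bar> < 1"
    using assms(2) by (simp add: abs_mult right_diff_distrib[symmetric])
  then show ?thesis
    using assms(2) by (simp add: field_simps)
qed

lemma segment_endpoints_from_point:
  fixes a b :: "'a::real_normed_vector"
  assumes "a \<noteq> b"
  defines "u \<equiv> (1 / dist a b) *\<^sub>R (a - b)"
  shows "a = ((1 - s) *\<^sub>R a + s *\<^sub>R b) + (s * dist a b) *\<^sub>R u"
    and "b = ((1 - s) *\<^sub>R a + s *\<^sub>R b) - ((1 - s) * dist a b) *\<^sub>R u"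
  using assms by (simp_all add: u_def algebra_simps)

lemma convex_hull_doubletons_meetE:
  assumes "convex hull {a, b} \<inter> convex hull {c, d} \<noteq> {}"
  obtains s t where "0 \<le> s" "s \<le> 1" "0 \<le> t" "t \<le> 1"
    "(1 - s) *\<^sub>R a + s *\<^sub>R b = (1 - t) *\<^sub>R c + t *\<^sub>R d"
  using assms by (auto simp: segment_convex_hull[symmetric] in_segment)

text \<open>For a segment \<open>ab\<close> meeting \<open>cd\<close> at \<open>(1 - s) a + s b = (1 - t) c + t d\<close>: the direction
  of \<open>ab\<close>, the position of the crossing on \<open>cd\<close>, and which of the pieces of lengths
  \<open>s |ab|\<close>, \<open>(1 - s) |ab|\<close> is short, all discretised.\<close>
definition crossing_key :: "point \<Rightarrow> point \<Rightarrow> point \<Rightarrow> point \<Rightarrow> real \<Rightarrow> real \<Rightarrow> int \<times> int \<times> int \<times> int"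
  where "crossing_key c d a b s t =
    (let u = (1 / dist a b) *\<^sub>R (a - b)
     in (\<lfloor>4 * u $ 1\<rfloor>, \<lfloor>4 * u $ 2\<rfloor>, \<lfloor>8 * t\<rfloor>, split_type (dist c d) (s * dist a b) ((1 - s) * dist a b)))"

lemma crossing_key_range:
  assumes "a \<noteq> b" "0 \<le> t" "t \<le> 1"
  shows "crossing_key c d a b s t \<in> {-4..4} \<times> {-4..4} \<times> {0..8} \<times> {0..2}"
proof -
  define u where "u = (1 / dist a b) *\<^sub>R (a - b)"
  have "norm u = 1"
    using assms(1) by (simp add: u_def dist_norm)
  then have component_bound: "\<bar>u $ i\<bar> \<le> 1" for i
    by (metis component_le_norm_cart)
  have "\<lfloor>4 * u $ i\<rfloor> \<in> {-4..4}" for i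
    using component_bound[of i] by (auto simp: le_floor_iff floor_le_iff abs_le_iff)
  moreover have "\<lfloor>8 * t\<rfloor> \<in> {0..8}"
    using assms(2,3) by (auto simp: le_floor_iff floor_le_iff)
  moreover have "split_type L \<alpha> \<beta> \<in> {0..2}" for L \<alpha> \<beta>
    by (simp add: split_type_def)
  ultimately show ?thesis
    unfolding crossing_key_def Let_def u_def[symmetric] by simp
qed

lemma crossing_key_eq_imp_endpoints_close:
  assumes "a1 \<noteq> b1" "a2 \<noteq> b2" "c \<noteq> d" and long: "dist c d \<le> dist a1 b1" "dist c d \<le> dist a2 b2"
    and s: "0 \<le> s1" "s1 \<le> 1" "0 \<le> s2" "s2 \<le> 1"
    and meet1: "(1 - s1) *\<^sub>R a1 + s1 *\<^sub>R b1 = (1 - t1) *\<^sub>R c + t1 *\<^sub>R d"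
    and meet2: "(1 - s2) *\<^sub>R a2 + s2 *\<^sub>R b2 = (1 - t2) *\<^sub>R c + t2 *\<^sub>R d"
    and key: "crossing_key c d a1 b1 s1 t1 = crossing_key c d a2 b2 s2 t2"
  shows "dist a1 a2 < max (dist a1 b1) (dist a2 b2)" and "dist b1 b2 < max (dist a1 b1) (dist a2 b2)"
proof -
  define u1 where "u1 = (1 / dist a1 b1) *\<^sub>R (a1 - b1)"
  define u2 where "u2 = (1 / dist a2 b2) *\<^sub>R (a2 - b2)"
  define x1 where "x1 = (1 - t1) *\<^sub>R c + t1 *\<^sub>R d"
  define x2 where "x2 = (1 - t2) *\<^sub>R c + t2 *\<^sub>R d"
  have u: "norm u1 = 1" "norm u2 = 1"
    using assms(1,2) by (simp_all add: u1_def u2_def dist_norm)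
  have floors: "\<lfloor>4 * u1 $ 1\<rfloor> = \<lfloor>4 * u2 $ 1\<rfloor>" "\<lfloor>4 * u1 $ 2\<rfloor> = \<lfloor>4 * u2 $ 2\<rfloor>" "\<lfloor>8 * t1\<rfloor> = \<lfloor>8 * t2\<rfloor>"
    and type: "split_type (dist c d) (s1 * dist a1 b1) ((1 - s1) * dist a1 b1)
      = split_type (dist c d) (s2 * dist a2 b2) ((1 - s2) * dist a2 b2)"
    using key by (simp_all add: crossing_key_def Let_def u1_def u2_def)
  have "norm (u1 - u2) \<le> \<bar>u1 $ 1 - u2 $ 1\<bar> + \<bar>u1 $ 2 - u2 $ 2\<bar>"
    using norm_le_l1_cart[of "u1 - u2"] by (simp add: sum_2)
  then have direction: "norm (u1 - u2) \<le> 1 / 2"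
    using floor_eq_imp_abs_diff_less[OF floors(1)] floor_eq_imp_abs_diff_less[OF floors(2)] by simp
  have "norm (x1 - x2) = \<bar>t1 - t2\<bar> * dist c d"
  proof -
    have "x1 - x2 = (t1 - t2) *\<^sub>R (d - c)"
      by (simp add: x1_def x2_def algebra_simps)
    then show ?thesis
      by (simp add: dist_norm norm_minus_commute)
  qed
  also have "\<dots> < 1 / 8 * dist c d"
    using floor_eq_imp_abs_diff_less[OF floors(3)] \<open>c \<noteq> d\<close> by (intro mult_strict_right_mono) auto
  finally have position: "norm (x1 - x2) < dist c d / 8"
    by simp
  have ends1: "a1 = x1 + (s1 * dist a1 b1) *\<^sub>R u1" "b1 = x1 - ((1 - s1) * dist a1 b1) *\<^sub>R u1"
    using segment_endpoints_from_point[OF assms(1), of s1] meet1 by (simp_all add: x1_def u1_def)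
  have ends2: "a2 = x2 + (s2 * dist a2 b2) *\<^sub>R u2" "b2 = x2 - ((1 - s2) * dist a2 b2) *\<^sub>R u2"
    using segment_endpoints_from_point[OF assms(2), of s2] meet2 by (simp_all add: x2_def u2_def)
  have pieces: "0 \<le> s1 * dist a1 b1" "0 \<le> (1 - s1) * dist a1 b1"
      "0 \<le> s2 * dist a2 b2" "0 \<le> (1 - s2) * dist a2 b2"
      "dist c d \<le> s1 * dist a1 b1 + (1 - s1) * dist a1 b1"
      "dist c d \<le> s2 * dist a2 b2 + (1 - s2) * dist a2 b2"
    using s long by (simp_all add: algebra_simps mult_left_le_one_le)
  have lengths: "s1 * dist a1 b1 + (1 - s1) * dist a1 b1 = dist a1 b1"
      "s2 * dist a2 b2 + (1 - s2) * dist a2 b2 = dist a2 b2"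
    by (simp_all add: algebra_simps)
  have "dist a1 a2 = dist (x1 + (s1 * dist a1 b1) *\<^sub>R u1) (x2 + (s2 * dist a2 b2) *\<^sub>R u2)"
    using ends1(1) ends2(1) by (rule arg_cong2)
  then show "dist a1 a2 < max (dist a1 b1) (dist a2 b2)"
    using split_endpoints_close(1)[OF u direction position pieces type] lengths
    by (simp add: dist_norm)
  have "dist b1 b2 = dist (x1 - ((1 - s1) * dist a1 b1) *\<^sub>R u1) (x2 - ((1 - s2) * dist a2 b2) *\<^sub>R u2)"
    using ends1(2) ends2(2) by (rule arg_cong2)
  then show "dist b1 b2 < max (dist a1 b1) (dist a2 b2)"
    using split_endpoints_close(2)[OF u direction position pieces type] lengths
    by (simp add: dist_norm)
qed

lemma MST_card_long_edges_crossing_segment_le: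
  assumes "finite X" and M: "is_MST X E" and "c \<noteq> d"
  shows "card {e\<in>E. dist c d \<le> edge_len e \<and> convex hull e \<inter> convex hull {c, d} \<noteq> {}} \<le> 2187"
proof -
  define S where "S = {e\<in>E. dist c d \<le> edge_len e \<and> convex hull e \<inter> convex hull {c, d} \<noteq> {}}"
  have EX: "E \<subseteq> complete_edges X"
    using M by (simp add: is_MST_def is_spanning_tree_def)
  have "\<exists>a b s t. e = {a, b} \<and> a \<noteq> b \<and> 0 \<le> s \<and> s \<le> 1 \<and> 0 \<le> t \<and> t \<le> 1 \<and>
      (1 - s) *\<^sub>R a + s *\<^sub>R b = (1 - t) *\<^sub>R c + t *\<^sub>R d" if e: "e \<in> S" for e
  proof -
    have "e \<in> complete_edges X"
      using e EX by (auto simp: S_def)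
    then obtain a b where ab: "e = {a, b}" "a \<noteq> b"
      by (rule in_complete_edgesE)
    moreover obtain s t where "0 \<le> s" "s \<le> 1" "0 \<le> t" "t \<le> 1"
        "(1 - s) *\<^sub>R a + s *\<^sub>R b = (1 - t) *\<^sub>R c + t *\<^sub>R d"
      using e ab(1) by (auto simp: S_def elim!: convex_hull_doubletons_meetE)
    ultimately show ?thesis
      by blast
  qed
  then obtain A B s t where param: "\<And>e. e \<in> S \<Longrightarrow> e = {A e, B e} \<and> A e \<noteq> B e \<and>
      0 \<le> s e \<and> s e \<le> 1 \<and> 0 \<le> t e \<and> t e \<le> 1 \<and>
      (1 - s e) *\<^sub>R A e + s e *\<^sub>R B e = (1 - t e) *\<^sub>R c + t e *\<^sub>R d"
    by metis
  define key where "key e = crossing_key c d (A e) (B e) (s e) (t e)" for e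
  \<comment> \<open>Equal keys would make the endpoints of two MST edges pairwise closer than the longer edge.\<close>
  have "inj_on key S"
  proof (rule inj_onI, rule ccontr)
    fix e1 e2 assume e1: "e1 \<in> S" and e2: "e2 \<in> S" and "key e1 = key e2" and "e1 \<noteq> e2"
    have edge: "dist c d \<le> dist (A e) (B e) \<and> {A e, B e} \<in> E" if "e \<in> S" for e
    proof -
      have "e \<in> E" "dist c d \<le> edge_len e" "e = {A e, B e}"
        using that param[OF that] by (simp_all add: S_def)
      then show ?thesis
        by (metis edge_len_doubleton)
    qed
    have distinct: "{A e1, B e1} \<noteq> {A e2, B e2}"
      using param[OF e1] param[OF e2] \<open>e1 \<noteq> e2\<close> by metis
    have "dist (A e1) (A e2) < max (dist (A e1) (B e1)) (dist (A e2) (B e2)) \<and>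
        dist (B e1) (B e2) < max (dist (A e1) (B e1)) (dist (A e2) (B e2))"
      using crossing_key_eq_imp_endpoints_close[of "A e1" "B e1" "A e2" "B e2" c d "s e1" "s e2"]
        param[OF e1] param[OF e2] edge[OF e1] edge[OF e2] \<open>c \<noteq> d\<close> \<open>key e1 = key e2\<close>
      by (simp add: key_def)
    then show False
      using MST_edge_le_max_endpoint_dist[OF \<open>finite X\<close> M, of "A e1" "B e1" "A e2" "B e2"]
        MST_edge_le_max_endpoint_dist[OF \<open>finite X\<close> M, of "A e2" "B e2" "A e1" "B e1"]
        param[OF e1] param[OF e2] edge[OF e1] edge[OF e2] distinct
      by (auto simp: dist_commute max_def split: if_splits)
  qed
  moreover have "key ` S \<subseteq> {-4..4} \<times> {-4..4} \<times> {0..8} \<times> {0..2}"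
  proof (rule image_subsetI)
    fix e assume "e \<in> S"
    then show "key e \<in> {-4..4} \<times> {-4..4} \<times> {0..8} \<times> {0..2}"
      using param unfolding key_def by (intro crossing_key_range) auto
  qed
  ultimately have "card S \<le> card ({-4..4::int} \<times> {-4..4::int} \<times> {0..8::int} \<times> {0..2::int})"
    by (rule card_inj_on_le) simp
  then show ?thesis
    by (simp add: S_def card_cartesian_product)
qed

lemma card_pairs_le_charge_to_shorter:
  fixes w :: "'a \<Rightarrow> 'b::linorder"
  assumes "finite E" "finite F"
    and F_bound: "\<And>f. f \<in> F \<Longrightarrow> card {e\<in>E. w f \<le> w e \<and> Q e f} \<le> k"
    and E_bound: "\<And>e. e \<in> E \<Longrightarrow> card {f\<in>F. w e \<le> w f \<and> Q e f} \<le> k"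
  shows "card {(e, f). e \<in> E \<and> f \<in> F \<and> Q e f} \<le> k * (card E + card F)"
proof -
  define U1 where "U1 = (\<Union>f\<in>F. {e\<in>E. w f \<le> w e \<and> Q e f} \<times> {f})"
  define U2 where "U2 = (\<Union>e\<in>E. {e} \<times> {f\<in>F. w e \<le> w f \<and> Q e f})"
  have "card U1 \<le> (\<Sum>f\<in>F. card ({e\<in>E. w f \<le> w e \<and> Q e f} \<times> {f}))"
    unfolding U1_def using \<open>finite F\<close> by (rule card_UN_le)
  also have "\<dots> \<le> card F * k"
    using F_bound sum_bounded_above[of F "\<lambda>f. card {e\<in>E. w f \<le> w e \<and> Q e f}" k]
    by (simp add: card_cartesian_product)
  finally have U1: "card U1 \<le> card F * k" .
  have "card U2 \<le> (\<Sum>e\<in>E. card ({e} \<times> {f\<in>F. w e \<le> w f \<and> Q e f}))"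
    unfolding U2_def using \<open>finite E\<close> by (rule card_UN_le)
  also have "\<dots> \<le> card E * k"
    using E_bound sum_bounded_above[of E "\<lambda>e. card {f\<in>F. w e \<le> w f \<and> Q e f}" k]
    by (simp add: card_cartesian_product)
  finally have U2: "card U2 \<le> card E * k" .
  have "finite (U1 \<union> U2)"
    using \<open>finite E\<close> \<open>finite F\<close> by (auto simp: U1_def U2_def)
  moreover have "{(e, f). e \<in> E \<and> f \<in> F \<and> Q e f} \<subseteq> U1 \<union> U2"
    by (auto simp: U1_def U2_def linear)
  ultimately have "card {(e, f). e \<in> E \<and> f \<in> F \<and> Q e f} \<le> card (U1 \<union> U2)"
    by (rule card_mono)
  also have "\<dots> \<le> card U1 + card U2"
    by (rule card_Un_le)
  finally show ?thesis
    using U1 U2 by (simp add: algebra_simps)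
qed

lemma is_MST_MST:
  assumes "generic P" "X \<subseteq> P"
  shows "is_MST X (MST X)"
proof -
  have "\<exists>!E. is_MST X E"
    using assms by (simp add: generic_def)
  then show ?thesis
    unfolding MST_def by (rule theI')
qed

lemma MST_finite_card_le:
  assumes "finite X" "is_MST X E"
  shows "finite E" and "card E \<le> card X"
  using assms spanning_tree_finite_edges by (auto simp: is_MST_def is_spanning_tree_def)

lemma MST_card_long_edges_crossing_edge_le:
  assumes "finite X" "is_MST X E" "f \<in> complete_edges Y"
  shows "card {e\<in>E. edge_len f \<le> edge_len e \<and> convex hull e \<inter> convex hull f \<noteq> {}} \<le> 2187"
  using assms(3) MST_card_long_edges_crossing_segment_le[OF assms(1,2)]
  by (auto elim: in_complete_edgesE)

lemma cr2_le:
  assumes "generic P" "R \<subseteq> P"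
  shows "cr2 R (P - R) \<le> 2187 * card P"
proof -
  have "finite P"
    using \<open>generic P\<close> by (simp add: generic_def)
  then have fin: "finite R" "finite (P - R)"
    using \<open>R \<subseteq> P\<close> finite_subset by auto
  have MST: "is_MST R (MST R)" "is_MST (P - R) (MST (P - R))"
    using is_MST_MST[OF \<open>generic P\<close>] \<open>R \<subseteq> P\<close> by auto
  then have edges: "MST R \<subseteq> complete_edges R" "MST (P - R) \<subseteq> complete_edges (P - R)"
    by (simp_all add: is_MST_def is_spanning_tree_def)
  have "cr2 R (P - R) \<le> 2187 * (card (MST R) + card (MST (P - R)))"
    unfolding cr2_def
  proof (rule card_pairs_le_charge_to_shorter[where w = edge_len])
    show "card {e \<in> MST R. edge_len f \<le> edge_len e \<and> convex hull e \<inter> convex hull f \<noteq> {}} \<le> 2187"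
      if "f \<in> MST (P - R)" for f
      using MST_card_long_edges_crossing_edge_le[OF fin(1) MST(1)] edges(2) that by blast
    show "card {f \<in> MST (P - R). edge_len e \<le> edge_len f \<and> convex hull e \<inter> convex hull f \<noteq> {}} \<le> 2187"
      if "e \<in> MST R" for e
    proof -
      have "{f \<in> MST (P - R). edge_len e \<le> edge_len f \<and> convex hull e \<inter> convex hull f \<noteq> {}}
          = {f \<in> MST (P - R). edge_len e \<le> edge_len f \<and> convex hull f \<inter> convex hull e \<noteq> {}}"
        by (simp add: Int_commute)
      then show ?thesis
        using MST_card_long_edges_crossing_edge_le[OF fin(2) MST(2)] edges(1) that by auto
    qed
  qed (use MST_finite_card_le(1)[OF fin(1) MST(1)] MST_finite_card_le(1)[OF fin(2) MST(2)] in auto)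
  also have "\<dots> \<le> 2187 * (card R + card (P - R))"
    using MST_finite_card_le(2)[OF fin(1) MST(1)] MST_finite_card_le(2)[OF fin(2) MST(2)] by simp
  also have "card R + card (P - R) = card P"
    using \<open>finite P\<close> \<open>R \<subseteq> P\<close> fin(1) by (simp add: card_Diff_subset card_mono)
  finally show ?thesis .
qed

lemma cr_le:
  assumes "generic P"
  shows "cr P \<le> 2187 * card P"
proof -
  have "finite P"
    using assms by (simp add: generic_def)
  have "cr P = Max ((\<lambda>R. cr2 R (P - R)) ` Pow P)"
    unfolding cr_def by (rule arg_cong[where f = Max]) auto
  also have "\<dots> \<le> 2187 * card P"
    using \<open>finite P\<close> cr2_le[OF assms] by (subst Max_le_iff) auto
  finally show ?thesis .
qed

theorem theorem1:
  shows "\<exists>c::real. c > 0 \<and>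
    (\<forall>P. generic P \<and> P \<noteq> {} \<longrightarrow> real (cr P) < c * real (card P))"
proof (intro exI[of _ 2188] conjI allI impI)
  fix P :: "point set"
  assume P: "generic P \<and> P \<noteq> {}"
  then have "card P > 0"
    by (simp add: generic_def card_gt_0_iff)
  moreover have "real (cr P) \<le> 2187 * real (card P)"
    using cr_le[of P] P by (simp flip: of_nat_mult)
  ultimately show "real (cr P) < 2188 * real (card P)"
    by simp
qed simp

end
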